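(* Let $M,t\ge 1$ be integers and $n=Mt$. Let $S_1,\dots,S_t\subseteq U$ be finite sets with $|S_k|\le M$ for every $k$, and let $x\in S_1\cap\dots\cap S_t$. Build a pair of tables as follows: - Table 1 uses mapping $h_1$ and ordering $H$. Here $x$ is placed in the table of $S_k$ iff every $s\in S_k\setminus\{x\}$ with $h_1(s)=h_1(x)$ has $H(s)>H(x)$. - Table 2 uses mapping $h_2$ and the reversed ordering. Here $x$ is placed in the table of $S_k$ iff every $s\in S_k\setminus\{x\}$ with $h_2(s)=h_2(x)$ has $H(s)<H(x)$. Say $x$ fails in a table if it is not placed in the table of at least one $S_k$. Then \[ \Pr[x\text{ fails in both tables}]\le\int_0^1(1-e^{-p})(1-e^{-(1-p)})\,dp=3e^{-1}-1\approx 0.10363 . \] Moreover, for $m$ such pairs of tables built with mutually independent triples $(h_1,h_2,H)$, the probability that $x$ fails in all $2m$ tables is at most $(3e^{-1}-1)^m$. In particular, for $m=13$ (26 tables) this is at most $2^{-42}$.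
   Context: Let $U$ be a universe of elements and let $n=Mt$ bins, indexed by $[n]$. The functions $h_1,h_2:U\to[n]$ are independent uniformly random functions. $H:U\to[0,1]$ has i.i.d. uniform values and is independent of $h_1,h_2$. The same functions are used for all $t$ sets. *)

theory Defs
  imports "HOL-Probability.Probability"
begin

text \<open>A uniformly random
  function h : U \<Rightarrow> [n] is modelled by the product of uniform distributions
  over all elements of the universe (the type 'a).\<close>
definition hash_space :: "nat \<Rightarrow> ('a \<Rightarrow> nat) measure" where
  "hash_space n = PiM UNIV (\<lambda>_. measure_pmf (pmf_of_set {..<n}))"

definition order_space :: "('a \<Rightarrow> real) measure" where
  "order_space = PiM UNIV (\<lambda>_. uniform_measure lborel {0..1})"

definition triple_space :: "nat \<Rightarrow> (('a \<Rightarrow> nat) \<times> ('a \<Rightarrow> nat) \<times> ('a \<Rightarrow> real)) measure" where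
  "triple_space n = hash_space n \<Otimes>\<^sub>M (hash_space n \<Otimes>\<^sub>M order_space)"

definition placed1 :: "('a \<Rightarrow> nat) \<Rightarrow> ('a \<Rightarrow> real) \<Rightarrow> 'a set \<Rightarrow> 'a \<Rightarrow> bool" where
  "placed1 h1 H S x = (\<forall>s\<in>S - {x}. h1 s = h1 x \<longrightarrow> H s > H x)"

definition placed2 :: "('a \<Rightarrow> nat) \<Rightarrow> ('a \<Rightarrow> real) \<Rightarrow> 'a set \<Rightarrow> 'a \<Rightarrow> bool" where
  "placed2 h2 H S x = (\<forall>s\<in>S - {x}. h2 s = h2 x \<longrightarrow> H s < H x)"

definition fails_both ::
  "nat \<Rightarrow> (nat \<Rightarrow> 'a set) \<Rightarrow> 'a \<Rightarrow> ('a \<Rightarrow> nat) \<times> ('a \<Rightarrow> nat) \<times> ('a \<Rightarrow> real) \<Rightarrow> bool" where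
  "fails_both t S x \<omega> = (case \<omega> of (h1, h2, H) \<Rightarrow>
      (\<exists>k\<in>{1..t}. \<not> placed1 h1 H (S k) x) \<and> (\<exists>k\<in>{1..t}. \<not> placed2 h2 H (S k) x))"

end

theory Submission
  imports Defs
begin

(*
  Let T be the union of the sets S k without x, so that card T < n.  Then x fails in both tables
  iff some s in T with H s <= H x shares the h1-bin of x and some s in T with H x <= H s shares
  the h2-bin of x.  Given H, the two hash functions are independent; with q = 1 - 1/n, x is
  blocked in table 1 with probability at most 1 - q^a and in table 2 with probability at most
  1 - q^b, where a and b count the elements of T below and above x.  As a + b >= card T, the
  product of the two is at most 1 - q^a - q^b + q^(card T), which is affine in q^a and q^b.
  Conditioned on H x = p, the expectations of q^a and q^b are (1 - p/n)^(card T) and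
  (1 - (1-p)/n)^(card T); these dominate exp (-p) and exp (-(1-p)) and their product dominates
  q^(card T), so the conditional bound is at most (1 - exp (-p)) (1 - exp (-(1-p))).
  Independent pairs of tables multiply the failure probabilities.
*)

lemma exp_minus_le_power:
  fixes p :: real and n N :: nat
  assumes p: "0 \<le> p" "p \<le> 1" and N: "N < n"
  shows "exp (- p) \<le> (1 - p / n) ^ N"
proof (cases "N = 0")
  case True
  then show ?thesis using p by simp
next
  case False
  with N have "real N \<le> real n - 1" "1 \<le> real N"
    by linarith+
  then have np: "real N \<le> real n - p" "0 < real n - p" "0 < real n"
    using p by linarith+
  have "n / (n - p) = 1 + p / (n - p)"
    using np by (simp add: field_simps)
  also have "\<dots> \<le> exp (p / (n - p))"
    by (rule exp_ge_add_one_self)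
  finally have "exp (- (p / (n - p))) \<le> (n - p) / n"
    using np by (simp add: exp_minus field_simps)
  also have "\<dots> = 1 - p / n"
    using np by (simp add: field_simps)
  finally have base: "exp (- (p / (n - p))) \<le> 1 - p / n" .
  have "p * N \<le> p * (n - p)"
    using np p by (intro mult_left_mono) auto
  then have "exp (- p) \<le> exp (- (p / (n - p)) * N)"
    using np by (simp add: field_simps)
  also have "\<dots> = exp (- (p / (n - p))) ^ N"
    by (rule exp_of_nat2_mult)
  also have "\<dots> \<le> (1 - p / n) ^ N"
    using base by (intro power_mono) auto
  finally show ?thesis .
qed

lemma linearized_le_exp_product:
  fixes p :: real and n N :: nat
  assumes p: "0 \<le> p" "p \<le> 1" and N: "N < n"
  shows "1 - (1 - p / n) ^ N - (1 - (1 - p) / n) ^ N + (1 - 1 / n) ^ N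
         \<le> (1 - exp (- p)) * (1 - exp (- (1 - p)))"
proof -
  define A where "A = (1 - p / n) ^ N"
  define B where "B = (1 - (1 - p) / n) ^ N"
  have n: "real n \<ge> 1"
    using N by simp
  have a0: "0 \<le> 1 - p / n" "1 - p / n \<le> 1" and b0: "0 \<le> 1 - (1 - p) / n" "1 - (1 - p) / n \<le> 1"
    using p n by (auto simp: field_simps)
  have A1: "A \<le> 1" unfolding A_def using a0 by (simp add: power_le_one)
  have B1: "B \<le> 1" unfolding B_def using b0 by (simp add: power_le_one)
  have q0: "0 \<le> 1 - 1 / real n" using n by simp
  have "1 - 1 / real n \<le> (1 - p / n) * (1 - (1 - p) / n)"
  proof -
    have "(1 - p / n) * (1 - (1 - p) / n) = 1 - 1 / n + p * (1 - p) / n ^ 2"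
      using n by (simp add: field_simps power2_eq_square)
    moreover have "0 \<le> p * (1 - p) / n ^ 2" using p by simp
    ultimately show ?thesis by linarith
  qed
  then have "(1 - 1 / real n) ^ N \<le> ((1 - p / n) * (1 - (1 - p) / n)) ^ N"
    using q0 by (intro power_mono)
  then have qAB: "(1 - 1 / real n) ^ N \<le> A * B" by (simp add: A_def B_def power_mult_distrib)
  have eA: "exp (- p) \<le> A" unfolding A_def using exp_minus_le_power[OF p N] .
  have eB: "exp (- (1 - p)) \<le> B" unfolding B_def using exp_minus_le_power[of "1 - p" N n] p N by simp
  have "1 - A - B + (1 - 1 / real n) ^ N \<le> (1 - A) * (1 - B)" using qAB by (simp add: algebra_simps)
  also have "\<dots> \<le> (1 - exp (- p)) * (1 - exp (- (1 - p)))"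
    using eA eB A1 B1 p by (intro mult_mono) auto
  finally show ?thesis by (simp add: A_def B_def)
qed

lemma prod_if_pair_le:
  fixes q :: real
  assumes "finite T" "0 \<le> q" "q \<le> 1" "\<forall>s\<in>T. P s \<or> Q s"
  shows "(\<Prod>s\<in>T. if P s then q else 1) * (\<Prod>s\<in>T. if Q s then q else 1) \<le> q ^ card T"
proof -
  have "(\<Prod>s\<in>T. if P s then q else 1) * (\<Prod>s\<in>T. if Q s then q else 1)
      = (\<Prod>s\<in>T. (if P s then q else 1) * (if Q s then q else 1))"
    by (simp add: prod.distrib)
  also have "\<dots> \<le> (\<Prod>s\<in>T. q)"
    using assms by (intro prod_mono) (auto simp: mult_left_le)
  finally show ?thesis by simp
qed

lemma card_UN_Diff_singleton_le:
  assumes "finite K" and "\<And>k. k \<in> K \<Longrightarrow> finite (S k) \<and> card (S k) \<le> M \<and> x \<in> S k"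
  shows "card (\<Union>k\<in>K. S k - {x}) \<le> card K * (M - 1)"
proof -
  have "card (\<Union>k\<in>K. S k - {x}) \<le> (\<Sum>k\<in>K. card (S k - {x}))"
    using assms(1) by (rule card_UN_le)
  also have "\<dots> \<le> (\<Sum>k\<in>K. M - 1)"
    using assms(2) by (intro sum_mono) (simp add: card_Diff_singleton diff_le_mono)
  finally show ?thesis by simp
qed

lemma has_integral_exp_product:
  "((\<lambda>p::real. (1 - exp (- p)) * (1 - exp (- (1 - p)))) has_integral (3 * exp (- 1) - 1)) {0..1}"
proof -
  define F where "F p = p + exp (- p) - exp (p - 1) + exp (- 1) * p" for p :: real
  have d: "(F has_vector_derivative (1 - exp (- p)) * (1 - exp (- (1 - p)))) (at p within {0..1})" for p
  proof -
    have "(F has_real_derivative (1 - exp (- p) - exp (p - 1) + exp (- 1))) (at p)"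
      unfolding F_def by (auto intro!: derivative_eq_intros)
    moreover have "1 - exp (- p) - exp (p - 1) + exp (- 1) = (1 - exp (- p)) * (1 - exp (- (1 - p)))"
      by (simp add: algebra_simps exp_add[symmetric])
    ultimately show ?thesis
      by (simp add: has_real_derivative_iff_has_vector_derivative has_vector_derivative_at_within)
  qed
  have "((\<lambda>p::real. (1 - exp (- p)) * (1 - exp (- (1 - p)))) has_integral (F 1 - F 0)) {0..1}"
    by (rule fundamental_theorem_of_calculus) (use d in auto)
  moreover have "F 1 - F 0 = 3 * exp (- 1) - 1" by (simp add: F_def)
  ultimately show ?thesis by simp
qed

lemma exp_one_ge: "163 / 60 \<le> exp (1::real)"
proof -
  have "(\<Sum>k<6. 1 ^ k /\<^sub>R fact k) \<le> exp (1::real)"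
    using sum_le_suminf[OF sums_summable[OF exp_converges[of "1::real"]], of "{..<6}"]
      sums_unique[OF exp_converges[of "1::real"]] by simp
  then show ?thesis by (simp add: numeral_eq_Suc fact_numeral lessThan_Suc)
qed

lemma three_div_e_minus_one_bounds:
  "0 \<le> 3 * exp (- 1) - (1::real)" "3 * exp (- 1) - 1 \<le> (17 / 163 :: real)"
  using exp_le exp_one_ge by (simp_all add: exp_minus field_simps)

lemma three_div_e_minus_one_pow_13_le: "(3 * exp (- 1) - 1) ^ 13 \<le> (1 / 2 ^ 42 :: real)"
proof -
  have "(3 * exp (- 1) - 1) ^ 13 \<le> (17 / 163 :: real) ^ 13"
    using three_div_e_minus_one_bounds by (rule power_mono[rotated])
  also have "\<dots> \<le> 1 / 2 ^ 42"
    by (simp add: power_divide divide_le_eq)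
  finally show ?thesis .
qed

subsection \<open>Products of probability spaces\<close>

lemma product_prob_space_const: "prob_space M \<Longrightarrow> product_prob_space (\<lambda>_. M)"
  by (simp add: product_prob_space_def product_sigma_finite_def product_prob_space_axioms_def
      prob_space_imp_sigma_finite)

lemma finite_product_prob_space_const:
  "prob_space M \<Longrightarrow> finite I \<Longrightarrow> finite_product_prob_space (\<lambda>_. M) I"
  by (simp add: finite_product_prob_space_def finite_product_sigma_finite_def product_sigma_finite_def
      finite_product_sigma_finite_axioms_def product_prob_space_const prob_space_imp_sigma_finite)

lemma measure_PiM_all_in:
  assumes M: "prob_space M" and I: "finite I" and E: "E \<in> sets M"
  shows "measure (PiM I (\<lambda>_. M)) {\<omega> \<in> space (PiM I (\<lambda>_. M)). \<forall>i\<in>I. \<omega> i \<in> E} = measure M E ^ card I"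
proof -
  interpret finite_product_prob_space "\<lambda>_. M" I
    using M I by (rule finite_product_prob_space_const)
  have "{\<omega> \<in> space (PiM I (\<lambda>_. M)). \<forall>i\<in>I. \<omega> i \<in> E} = Pi\<^sub>E I (\<lambda>_. E)"
    using sets.sets_into_space[OF E] by (auto simp: space_PiM PiE_def Pi_def)
  then show ?thesis
    using E by (simp add: finite_measure_PiM_emb)
qed

lemma (in prob_space) integrable_if_mem:
  fixes c :: real
  assumes [measurable]: "A \<in> events"
  shows "integrable M (\<lambda>a. if a \<in> A then c else 1)"
  by (rule integrable_const_bound[where B = "max \<bar>c\<bar> 1"]) simp_all

lemma (in prob_space) expectation_if_mem:
  fixes c :: real
  assumes A: "A \<in> events"
  shows "expectation (\<lambda>a. if a \<in> A then c else 1) = 1 - (1 - c) * prob A"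
proof -
  have "expectation (\<lambda>a. if a \<in> A then c else 1) = expectation (\<lambda>a. 1 - (1 - c) * indicator A a)"
    by (intro Bochner_Integration.integral_cong) (auto simp: indicator_def)
  also have "\<dots> = expectation (\<lambda>_. 1) - expectation (\<lambda>a. (1 - c) * indicator A a)"
    using A by (intro Bochner_Integration.integral_diff) (auto simp: emeasure_eq_measure)
  also have "\<dots> = 1 - (1 - c) * prob A"
    using A by (simp add: prob_space)
  finally show ?thesis .
qed

lemma integral_PiM_prod_if_mem:
  fixes c :: real
  assumes M: "prob_space M" and T: "finite T" and A: "A \<in> sets M"
  shows "(\<integral>Z. (\<Prod>s\<in>T. if Z s \<in> A then c else 1) \<partial>PiM T (\<lambda>_. M))
           = (1 - (1 - c) * measure M A) ^ card T"
proof -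
  interpret product_prob_space "\<lambda>_. M" T
    using M by (rule product_prob_space_const)
  have "(\<integral>Z. (\<Prod>s\<in>T. if Z s \<in> A then c else 1) \<partial>PiM T (\<lambda>_. M))
      = (\<Prod>s\<in>T. \<integral>a. (if a \<in> A then c else 1) \<partial>M)"
    using T A by (intro product_integral_prod prob_space.integrable_if_mem[OF M])
  also have "\<dots> = (1 - (1 - c) * measure M A) ^ card T"
    using prob_space.expectation_if_mem[OF M A] by simp
  finally show ?thesis .
qed

lemma nn_integral_PiM_linearized:
  assumes M: "prob_space M" and T: "finite T" and A: "A \<in> sets M" and B: "B \<in> sets M"
    and cover: "space M \<subseteq> A \<union> B" and q: "0 \<le> q" "q \<le> 1"
  shows "(\<integral>\<^sup>+Z. ennreal (1 - (\<Prod>s\<in>T. if Z s \<in> A then q else 1) - (\<Prod>s\<in>T. if Z s \<in> B then q else 1)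
              + q ^ card T) \<partial>PiM T (\<lambda>_. M))
       = ennreal (1 - (1 - (1 - q) * measure M A) ^ card T - (1 - (1 - q) * measure M B) ^ card T
              + q ^ card T)"
proof -
  interpret finite_product_prob_space "\<lambda>_. M" T
    using M T by (rule finite_product_prob_space_const)
  let ?P = "\<lambda>C Z. \<Prod>s\<in>T. if Z s \<in> C then q else 1"
  have integrable: "integrable (PiM T (\<lambda>_. M)) (?P C)" if "C \<in> sets M" for C
    using T that by (intro product_integrable_prod prob_space.integrable_if_mem[OF M])
  have nonneg: "0 \<le> 1 - ?P A Z - ?P B Z + q ^ card T" if "Z \<in> space (PiM T (\<lambda>_. M))" for Z
  proof -
    have "?P A Z \<le> 1" "?P B Z \<le> 1"
      using q by (auto intro!: prod_le_1)
    then have "0 \<le> (1 - ?P A Z) * (1 - ?P B Z)"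
      by simp
    moreover have "?P A Z * ?P B Z \<le> q ^ card T"
      using that cover T q by (intro prod_if_pair_le) (auto simp: space_PiM)
    ultimately show ?thesis
      by (simp add: algebra_simps)
  qed
  have "(\<integral>\<^sup>+Z. ennreal (1 - ?P A Z - ?P B Z + q ^ card T) \<partial>PiM T (\<lambda>_. M))
      = ennreal (\<integral>Z. 1 - ?P A Z - ?P B Z + q ^ card T \<partial>PiM T (\<lambda>_. M))"
    using integrable[OF A] integrable[OF B] nonneg by (intro nn_integral_eq_integral) auto
  also have "(\<integral>Z. 1 - ?P A Z - ?P B Z + q ^ card T \<partial>PiM T (\<lambda>_. M))
      = 1 - (\<integral>Z. ?P A Z \<partial>PiM T (\<lambda>_. M)) - (\<integral>Z. ?P B Z \<partial>PiM T (\<lambda>_. M)) + q ^ card T"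
    using integrable[OF A] integrable[OF B] by (simp add: P.prob_space)
  finally show ?thesis
    using integral_PiM_prod_if_mem[OF M T A] integral_PiM_prod_if_mem[OF M T B] by simp
qed

subsection \<open>Hash functions\<close>

lemma prob_space_hash_space: "prob_space (hash_space n)"
  unfolding hash_space_def by (rule prob_space_PiM) (rule prob_space_measure_pmf)

lemma space_hash_space [simp]: "space (hash_space n) = UNIV"
  by (simp add: hash_space_def space_PiM)

lemma collision_in_sets_hash_space:
  "finite T \<Longrightarrow> {h. \<exists>s\<in>T. P s \<and> h s = h x} \<in> sets (hash_space n)"
proof -
  assume "finite T"
  then have "{h \<in> space (hash_space n). \<exists>s\<in>T. P s \<and> h s = h x} \<in> sets (hash_space n)"
    unfolding hash_space_def by measurable
  then show ?thesis by simp
qed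

lemma measure_hash_space_alone_in_bin:
  assumes u: "u < n" and T: "finite T" "x \<notin> T"
  shows "measure (hash_space n) {h. h x = u \<and> (\<forall>s\<in>T. h s \<noteq> u)} = 1 / real n * (1 - 1 / real n) ^ card T"
proof -
  let ?U = "measure_pmf (pmf_of_set {..<n})"
  interpret product_prob_space "\<lambda>_::'a. ?U" UNIV
    by (intro product_prob_space_const prob_space_measure_pmf)
  have single: "measure ?U {u} = 1 / real n"
    using u by (subst measure_pmf_single) (simp add: lessThan_empty_iff)
  have compl: "measure ?U (- {u}) = 1 - 1 / real n"
    using single measure_pmf.prob_compl[of "{u}" "pmf_of_set {..<n}"] by (simp add: Compl_eq_Diff_UNIV)
  define X where "X s = (if s = x then {u} else - {u} :: nat set)" for s
  have X: "X x = {u}" "\<And>s. s \<in> T \<Longrightarrow> X s = - {u}"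
    using T by (auto simp: X_def)
  have "{h. h x = u \<and> (\<forall>s\<in>T. h s \<noteq> u)} = prod_emb UNIV (\<lambda>_. ?U) (insert x T) (Pi\<^sub>E (insert x T) X)"
    by (auto simp: prod_emb_def Pi_iff X)
  then have "measure (hash_space n) {h. h x = u \<and> (\<forall>s\<in>T. h s \<noteq> u)} = (\<Prod>s\<in>insert x T. measure ?U (X s))"
    unfolding hash_space_def using T by (simp add: measure_PiM_emb)
  also have "\<dots> = measure ?U {u} * (\<Prod>s\<in>T. measure ?U (- {u}))"
    using T by (simp add: X)
  finally show ?thesis
    by (simp add: single compl)
qed

lemma measure_hash_space_no_collision:
  assumes n: "n \<ge> 1" and T: "finite T" "x \<notin> T"
  shows "(1 - 1 / real n) ^ card T \<le> measure (hash_space n) {h. \<forall>s\<in>T. h s \<noteq> h x}"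
proof -
  interpret prob_space "hash_space n" by (rule prob_space_hash_space)
  define bin where "bin u = {h :: 'a \<Rightarrow> nat. h x = u \<and> (\<forall>s\<in>T. h s \<noteq> u)}" for u
  have bin_sets: "bin u \<in> sets (hash_space n)" for u
  proof -
    have "{h \<in> space (hash_space n). h x = u \<and> (\<forall>s\<in>T. h s \<noteq> u)} \<in> sets (hash_space n)"
      unfolding hash_space_def using T(1) by measurable
    then show ?thesis by (simp add: bin_def)
  qed
  have no_collision_eq:
    "{h. \<forall>s\<in>T. h s \<noteq> h x} = space (hash_space n) - {h. \<exists>s\<in>T. True \<and> h s = h x}"
    by auto
  have "(1 - 1 / real n) ^ card T = (\<Sum>u<n. measure (hash_space n) (bin u))"
    using n T by (simp add: bin_def measure_hash_space_alone_in_bin)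
  also have "\<dots> = measure (hash_space n) (\<Union>u<n. bin u)"
    using bin_sets by (intro finite_measure_finite_Union[symmetric]) (auto simp: disjoint_family_on_def bin_def)
  also have "\<dots> \<le> measure (hash_space n) {h. \<forall>s\<in>T. h s \<noteq> h x}"
    unfolding no_collision_eq
    by (intro finite_measure_mono sets.compl_sets collision_in_sets_hash_space T(1)) (auto simp: bin_def)
  finally show ?thesis .
qed

lemma measure_hash_space_collision:
  assumes n: "n \<ge> 1" and T: "finite T" "x \<notin> T"
  shows "measure (hash_space n) {h. \<exists>s\<in>T. P s \<and> h s = h x}
           \<le> 1 - (\<Prod>s\<in>T. if P s then 1 - 1 / real n else 1)"
proof -
  interpret prob_space "hash_space n" by (rule prob_space_hash_space)
  let ?T = "{s \<in> T. P s}"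
  have no_collision_eq: "{h. \<forall>s\<in>?T. h s \<noteq> h x} = space (hash_space n) - {h. \<exists>s\<in>T. P s \<and> h s = h x}"
    by auto
  have "(\<Prod>s\<in>T. if P s then 1 - 1 / real n else 1) = (1 - 1 / real n) ^ card ?T"
    using T by (simp add: prod.inter_filter[symmetric])
  also have "\<dots> \<le> measure (hash_space n) {h. \<forall>s\<in>?T. h s \<noteq> h x}"
    using T by (intro measure_hash_space_no_collision n) auto
  also have "\<dots> = 1 - measure (hash_space n) {h. \<exists>s\<in>T. P s \<and> h s = h x}"
    unfolding no_collision_eq using T by (intro prob_compl collision_in_sets_hash_space)
  finally show ?thesis by simp
qed

subsection \<open>Random orderings\<close>

abbreviation uniform01 :: "real measure" where
  "uniform01 \<equiv> uniform_measure lborel {0..1}"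

lemma prob_space_uniform01: "prob_space uniform01"
  by (rule prob_space_uniform_measure) auto

lemma nn_integral_uniform01_has_integral:
  fixes f :: "real \<Rightarrow> real"
  assumes f: "f \<in> borel_measurable borel" and I: "(f has_integral I) {0..1}"
    and nonneg: "\<And>y. y \<in> {0..1} \<Longrightarrow> 0 \<le> f y"
  shows "(\<integral>\<^sup>+y. ennreal (f y) \<partial>uniform01) = ennreal I"
proof -
  have "(\<integral>\<^sup>+y. ennreal (f y) \<partial>uniform01)
      = (\<integral>\<^sup>+y. ennreal (f y) * indicator {0..1} y \<partial>lborel) / emeasure lborel {0..1::real}"
    using f by (intro nn_integral_uniform_measure) auto
  also have "\<dots> = ennreal I"
    using nn_integral_has_integral_lebesgue'[OF nonneg I] by (simp add: divide_ennreal_def)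
  finally show ?thesis .
qed

lemma prob_space_order_space: "prob_space order_space"
  unfolding order_space_def by (rule prob_space_PiM) (rule prob_space_uniform01)

lemma space_order_space [simp]: "space order_space = UNIV"
  by (simp add: order_space_def space_PiM)

lemma nn_integral_order_space_insert:
  fixes g :: "('a \<Rightarrow> real) \<Rightarrow> ennreal"
  assumes T: "finite T" "x \<notin> T" and g: "g \<in> borel_measurable (PiM (insert x T) (\<lambda>_. uniform01))"
  shows "(\<integral>\<^sup>+H. g (restrict H (insert x T)) \<partial>order_space)
           = (\<integral>\<^sup>+y. (\<integral>\<^sup>+Z. g (Z(x := y)) \<partial>PiM T (\<lambda>_. uniform01)) \<partial>uniform01)"
proof -
  interpret product_prob_space "\<lambda>_::'a. uniform01" UNIV
    using prob_space_uniform01 by (rule product_prob_space_const)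
  have "(\<integral>\<^sup>+H. g (restrict H (insert x T)) \<partial>order_space)
      = (\<integral>\<^sup>+Z. g Z \<partial>distr order_space (PiM (insert x T) (\<lambda>_. uniform01)) (\<lambda>H. restrict H (insert x T)))"
    unfolding order_space_def using g
    by (intro nn_integral_distr[symmetric] measurable_restrict_subset) auto
  also have "\<dots> = (\<integral>\<^sup>+Z. g Z \<partial>PiM (insert x T) (\<lambda>_. uniform01))"
    unfolding order_space_def using T by (simp add: distr_PiM_restrict_finite)
  also have "\<dots> = (\<integral>\<^sup>+y. (\<integral>\<^sup>+Z. g (Z(x := y)) \<partial>PiM T (\<lambda>_. uniform01)) \<partial>uniform01)"
    using T g by (intro product_nn_integral_insert_rev) auto
  finally show ?thesis .
qed

lemma nn_integral_order_space_linearized: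
  fixes T :: "'a set" and q :: real
  assumes T: "finite T" "x \<notin> T" and q: "0 \<le> q" "q \<le> 1"
  shows "(\<integral>\<^sup>+H. ennreal (1 - (\<Prod>s\<in>T. if H s \<le> H x then q else 1) - (\<Prod>s\<in>T. if H x \<le> H s then q else 1)
              + q ^ card T) \<partial>order_space)
       = (\<integral>\<^sup>+y. ennreal (1 - (1 - (1 - q) * y) ^ card T - (1 - (1 - q) * (1 - y)) ^ card T
              + q ^ card T) \<partial>uniform01)"
proof -
  define g where "g Z = ennreal (1 - (\<Prod>s\<in>T. if Z s \<le> Z x then q else 1)
      - (\<Prod>s\<in>T. if Z x \<le> Z s then q else 1) + q ^ card T)" for Z :: "'a \<Rightarrow> real"
  have g_measurable: "g \<in> borel_measurable (PiM (insert x T) (\<lambda>_. uniform01))"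
    unfolding g_def using T by measurable
  have g_restrict: "g (restrict H (insert x T)) = g H" for H
    unfolding g_def by simp
  have g_update: "g (Z(x := y)) = ennreal (1 - (\<Prod>s\<in>T. if Z s \<in> {..y} then q else 1)
      - (\<Prod>s\<in>T. if Z s \<in> {y..} then q else 1) + q ^ card T)" for Z y
  proof -
    have "(Z(x := y)) s = Z s" if "s \<in> T" for s
      using that T by auto
    then show ?thesis
      unfolding g_def by simp
  qed
  have "(\<integral>\<^sup>+H. g H \<partial>order_space) = (\<integral>\<^sup>+H. g (restrict H (insert x T)) \<partial>order_space)"
    by (simp add: g_restrict)
  also have "\<dots> = (\<integral>\<^sup>+y. (\<integral>\<^sup>+Z. g (Z(x := y)) \<partial>PiM T (\<lambda>_. uniform01)) \<partial>uniform01)"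
    using T g_measurable by (rule nn_integral_order_space_insert)
  also have "\<dots> = (\<integral>\<^sup>+y. ennreal (1 - (1 - (1 - q) * y) ^ card T - (1 - (1 - q) * (1 - y)) ^ card T
              + q ^ card T) \<partial>uniform01)"
  proof (intro nn_integral_cong_AE AE_uniform_measureI AE_I2 impI)
    fix y :: real assume "y \<in> {0..1}"
    then show "(\<integral>\<^sup>+Z. g (Z(x := y)) \<partial>PiM T (\<lambda>_. uniform01))
        = ennreal (1 - (1 - (1 - q) * y) ^ card T - (1 - (1 - q) * (1 - y)) ^ card T + q ^ card T)"
      unfolding g_update using T(1) q
      by (subst nn_integral_PiM_linearized[OF prob_space_uniform01]) auto
  qed auto
  finally show ?thesis
    by (simp add: g_def)
qed

lemma nn_integral_order_space_linearized_le:
  fixes T :: "'a set"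
  assumes T: "finite T" "x \<notin> T" and N: "card T < n"
  defines "q \<equiv> 1 - 1 / real n"
  shows "(\<integral>\<^sup>+H. ennreal (1 - (\<Prod>s\<in>T. if H s \<le> H x then q else 1) - (\<Prod>s\<in>T. if H x \<le> H s then q else 1)
              + q ^ card T) \<partial>order_space) \<le> ennreal (3 * exp (- 1) - 1)"
proof -
  have q: "0 \<le> q" "q \<le> 1"
    using N by (auto simp: q_def)
  have one_minus_q: "(1 - q) * y = y / n" for y
    by (simp add: q_def)
  have "(\<integral>\<^sup>+y. ennreal (1 - (1 - (1 - q) * y) ^ card T - (1 - (1 - q) * (1 - y)) ^ card T
              + q ^ card T) \<partial>uniform01)
      \<le> (\<integral>\<^sup>+y. ennreal ((1 - exp (- y)) * (1 - exp (- (1 - y)))) \<partial>uniform01)"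
    unfolding one_minus_q q_def
    by (intro nn_integral_mono_AE AE_uniform_measureI AE_I2 impI ennreal_leI)
       (use linearized_le_exp_product[OF _ _ N] in auto)
  also have "\<dots> = ennreal (3 * exp (- 1) - 1)"
    by (intro nn_integral_uniform01_has_integral has_integral_exp_product) auto
  finally show ?thesis
    unfolding nn_integral_order_space_linearized[OF T q] .
qed

subsection \<open>The two tables\<close>

lemma prob_space_triple_space: "prob_space (triple_space n)"
  unfolding triple_space_def
  by (intro prob_space_pair prob_space_hash_space prob_space_order_space)

lemma space_triple_space [simp]: "space (triple_space n) = UNIV"
  by (simp add: triple_space_def space_pair_measure)

lemma sets_triple_space:
  "sets (triple_space n :: (('a \<Rightarrow> nat) \<times> ('a \<Rightarrow> nat) \<times> ('a \<Rightarrow> real)) measure)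
     = sets (PiM UNIV (\<lambda>_. borel) \<Otimes>\<^sub>M (PiM UNIV (\<lambda>_. borel) \<Otimes>\<^sub>M PiM UNIV (\<lambda>_. borel)))"
  unfolding triple_space_def hash_space_def order_space_def
  by (intro sets_pair_measure_cong sets_PiM_cong) (auto simp: sets_borel_eq_count_space)

lemma measurable_triple_space_components:
  "(\<lambda>\<omega>. fst \<omega> s) \<in> borel_measurable (triple_space n)"
  "(\<lambda>\<omega>. fst (snd \<omega>) s) \<in> borel_measurable (triple_space n)"
  "(\<lambda>\<omega>. snd (snd \<omega>) s) \<in> borel_measurable (triple_space n)"
  unfolding measurable_cong_sets[OF sets_triple_space refl]
  by (intro measurable_compose[OF measurable_fst] measurable_compose[OF measurable_snd]
        measurable_component_singleton; simp)+

definition blocked_both :: "'a set \<Rightarrow> 'a \<Rightarrow> ('a \<Rightarrow> nat) \<times> ('a \<Rightarrow> nat) \<times> ('a \<Rightarrow> real) \<Rightarrow> bool" where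
  "blocked_both T x = (\<lambda>(h1, h2, H).
     (\<exists>s\<in>T. H s \<le> H x \<and> h1 s = h1 x) \<and> (\<exists>s\<in>T. H x \<le> H s \<and> h2 s = h2 x))"

lemma fails_both_iff_blocked_both:
  "fails_both t S x \<omega> \<longleftrightarrow> blocked_both (\<Union>k\<in>{1..t}. S k - {x}) x \<omega>"
  by (auto simp: fails_both_def blocked_both_def placed1_def placed2_def not_less split: prod.splits)

lemma blocked_both_in_sets:
  assumes "finite T"
  shows "{\<omega> \<in> space (triple_space n). blocked_both T x \<omega>} \<in> sets (triple_space n)"
proof -
  let ?ev = "\<lambda>P. {\<omega> \<in> space (triple_space n). P \<omega>}"
  have "?ev (blocked_both T x)
      = (\<Union>s\<in>T. ?ev (\<lambda>\<omega>. snd (snd \<omega>) s \<le> snd (snd \<omega>) x) \<inter> ?ev (\<lambda>\<omega>. fst \<omega> s = fst \<omega> x))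
        \<inter> (\<Union>s\<in>T. ?ev (\<lambda>\<omega>. snd (snd \<omega>) x \<le> snd (snd \<omega>) s) \<inter> ?ev (\<lambda>\<omega>. fst (snd \<omega>) s = fst (snd \<omega>) x))"
    by (auto simp: blocked_both_def)
  also have "\<dots> \<in> sets (triple_space n)"
    using assms
    by (intro sets.Int sets.finite_UN ballI borel_measurable_le borel_measurable_eq
        measurable_triple_space_components)
  finally show ?thesis .
qed

lemma emeasure_triple_space_cond_indep:
  fixes A B :: "('a \<Rightarrow> real) \<Rightarrow> ('a \<Rightarrow> nat) set"
  assumes E: "{(h1, h2, H). h1 \<in> A H \<and> h2 \<in> B H} \<in> sets (triple_space n)"
    and A: "\<And>H. A H \<in> sets (hash_space n)" and B: "\<And>H. B H \<in> sets (hash_space n)"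
  shows "emeasure (triple_space n) {(h1, h2, H). h1 \<in> A H \<and> h2 \<in> B H}
           = (\<integral>\<^sup>+H. emeasure (hash_space n) (A H) * emeasure (hash_space n) (B H) \<partial>order_space)"
proof -
  let ?E = "{(h1, h2, H). h1 \<in> A H \<and> h2 \<in> B H}"
  let ?HS = "hash_space n :: ('a \<Rightarrow> nat) measure"
  interpret H_O: pair_sigma_finite ?HS order_space
    by (intro pair_sigma_finite.intro prob_space_imp_sigma_finite prob_space_hash_space
        prob_space_order_space)
  interpret H_HO: pair_sigma_finite ?HS "?HS \<Otimes>\<^sub>M order_space"
    by (intro pair_sigma_finite.intro prob_space_imp_sigma_finite prob_space_hash_space
        prob_space_pair prob_space_order_space)
  have [measurable]: "indicator ?E \<in> borel_measurable (?HS \<Otimes>\<^sub>M (?HS \<Otimes>\<^sub>M order_space))"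
    using E unfolding triple_space_def by simp
  have "emeasure (triple_space n) ?E = (\<integral>\<^sup>+\<omega>. indicator ?E \<omega> \<partial>(?HS \<Otimes>\<^sub>M (?HS \<Otimes>\<^sub>M order_space)))"
    using E by (simp add: triple_space_def)
  also have "\<dots> = (\<integral>\<^sup>+p. (\<integral>\<^sup>+h1. indicator ?E (h1, p) \<partial>?HS) \<partial>(?HS \<Otimes>\<^sub>M order_space))"
    by (rule H_HO.nn_integral_snd[symmetric]) simp
  also have "\<dots> = (\<integral>\<^sup>+H. (\<integral>\<^sup>+h2. (\<integral>\<^sup>+h1. indicator ?E (h1, h2, H) \<partial>?HS) \<partial>?HS) \<partial>order_space)"
    by (rule H_O.nn_integral_snd[symmetric, where f = "\<lambda>p. \<integral>\<^sup>+h1. indicator ?E (h1, p) \<partial>?HS"])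
      measurable
  also have "\<dots> = (\<integral>\<^sup>+H. emeasure ?HS (A H) * emeasure ?HS (B H) \<partial>order_space)"
  proof (rule nn_integral_cong)
    fix H
    have "(\<integral>\<^sup>+h1. indicator ?E (h1, h2, H) \<partial>?HS) = emeasure ?HS (A H) * indicator (B H) h2" for h2
    proof -
      have "(\<integral>\<^sup>+h1. indicator ?E (h1, h2, H) \<partial>?HS) = (\<integral>\<^sup>+h1. indicator (A H) h1 * indicator (B H) h2 \<partial>?HS)"
        by (intro nn_integral_cong) (simp add: indicator_def)
      also have "\<dots> = emeasure ?HS (A H) * indicator (B H) h2"
        using A by (simp add: nn_integral_multc)
      finally show ?thesis .
    qed
    then show "(\<integral>\<^sup>+h2. (\<integral>\<^sup>+h1. indicator ?E (h1, h2, H) \<partial>?HS) \<partial>?HS)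
        = emeasure ?HS (A H) * emeasure ?HS (B H)"
      using B by (simp add: nn_integral_cmult_indicator)
  qed
  finally show ?thesis .
qed

lemma emeasure_hash_space_collision_pair_le:
  assumes n: "n \<ge> 1" and T: "finite T" "x \<notin> T" and cover: "\<forall>s\<in>T. P s \<or> Q s"
  defines "q \<equiv> 1 - 1 / real n"
  shows "emeasure (hash_space n) {h. \<exists>s\<in>T. P s \<and> h s = h x}
           * emeasure (hash_space n) {h. \<exists>s\<in>T. Q s \<and> h s = h x}
         \<le> ennreal (1 - (\<Prod>s\<in>T. if P s then q else 1) - (\<Prod>s\<in>T. if Q s then q else 1) + q ^ card T)"
proof -
  interpret prob_space "hash_space n" by (rule prob_space_hash_space)
  let ?P = "\<Prod>s\<in>T. if P s then q else 1" and ?Q = "\<Prod>s\<in>T. if Q s then q else 1"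
  have q: "0 \<le> q" "q \<le> 1"
    using n by (auto simp: q_def)
  have "?P \<le> 1" "?Q \<le> 1"
    using q by (auto intro!: prod_le_1)
  have "emeasure (hash_space n) {h. \<exists>s\<in>T. P s \<and> h s = h x}
          * emeasure (hash_space n) {h. \<exists>s\<in>T. Q s \<and> h s = h x}
      \<le> ennreal (1 - ?P) * ennreal (1 - ?Q)"
    unfolding emeasure_eq_measure q_def
    by (intro mult_mono ennreal_leI measure_hash_space_collision n T) auto
  also have "\<dots> = ennreal ((1 - ?P) * (1 - ?Q))"
    using \<open>?P \<le> 1\<close> \<open>?Q \<le> 1\<close> by (simp add: ennreal_mult)
  also have "\<dots> \<le> ennreal (1 - ?P - ?Q + q ^ card T)"
    using prod_if_pair_le[OF T(1) q cover] by (intro ennreal_leI) (simp add: algebra_simps)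
  finally show ?thesis .
qed

lemma measure_blocked_both_le:
  assumes T: "finite T" "x \<notin> T" and N: "card T < n"
  shows "measure (triple_space n) {\<omega> \<in> space (triple_space n). blocked_both T x \<omega>} \<le> 3 * exp (- 1) - 1"
proof -
  interpret prob_space "triple_space n" by (rule prob_space_triple_space)
  define A where "A H = {h :: 'a \<Rightarrow> nat. \<exists>s\<in>T. H s \<le> H x \<and> h s = h x}" for H :: "'a \<Rightarrow> real"
  define B where "B H = {h :: 'a \<Rightarrow> nat. \<exists>s\<in>T. H x \<le> H s \<and> h s = h x}" for H :: "'a \<Rightarrow> real"
  have blocked_eq: "{\<omega> \<in> space (triple_space n). blocked_both T x \<omega>} = {(h1, h2, H). h1 \<in> A H \<and> h2 \<in> B H}"
    by (auto simp: blocked_both_def A_def B_def)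
  have "emeasure (triple_space n) {\<omega> \<in> space (triple_space n). blocked_both T x \<omega>}
      = (\<integral>\<^sup>+H. emeasure (hash_space n) (A H) * emeasure (hash_space n) (B H) \<partial>order_space)"
    using blocked_both_in_sets[OF T(1), of n x] unfolding blocked_eq A_def B_def
    by (intro emeasure_triple_space_cond_indep collision_in_sets_hash_space T(1))
  also have "\<dots> \<le> (\<integral>\<^sup>+H. ennreal (1 - (\<Prod>s\<in>T. if H s \<le> H x then 1 - 1 / real n else 1)
        - (\<Prod>s\<in>T. if H x \<le> H s then 1 - 1 / real n else 1) + (1 - 1 / real n) ^ card T) \<partial>order_space)"
    unfolding A_def B_def using N T
    by (intro nn_integral_mono emeasure_hash_space_collision_pair_le) auto
  also have "\<dots> \<le> ennreal (3 * exp (- 1) - 1)"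
    using T N by (rule nn_integral_order_space_linearized_le)
  finally show ?thesis
    using three_div_e_minus_one_bounds(1) by (simp add: emeasure_eq_measure)
qed

theorem mainTheorem3:
  fixes M t n :: nat and S :: "nat \<Rightarrow> 'a set" and x :: 'a
  assumes "M \<ge> 1" and "t \<ge> 1" and "n = M * t"
    and "\<forall>k\<in>{1..t}. finite (S k) \<and> card (S k) \<le> M"
    and "\<forall>k\<in>{1..t}. x \<in> S k"
  shows "measure (triple_space n) {\<omega> \<in> space (triple_space n). fails_both t S x \<omega>}
           \<le> integral {0..1} (\<lambda>p::real. (1 - exp (- p)) * (1 - exp (- (1 - p))))
    \<and> integral {0..1} (\<lambda>p::real. (1 - exp (- p)) * (1 - exp (- (1 - p)))) = 3 * exp (- 1) - 1
    \<and> (\<forall>m::nat. measure (PiM {..<m} (\<lambda>_. triple_space n))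
            {\<omega> \<in> space (PiM {..<m} (\<lambda>_. triple_space n)). \<forall>i<m. fails_both t S x (\<omega> i)}
          \<le> (3 * exp (- 1) - 1) ^ m)
    \<and> measure (PiM {..<13::nat} (\<lambda>_. triple_space n))
            {\<omega> \<in> space (PiM {..<13::nat} (\<lambda>_. triple_space n)). \<forall>i<(13::nat). fails_both t S x (\<omega> i)}
          \<le> 1 / 2 ^ 42"
proof -
  define T where "T = (\<Union>k\<in>{1..t}. S k - {x})"
  have T: "finite T" "x \<notin> T"
    using assms(4) by (auto simp: T_def)
  have "card T \<le> t * (M - 1)"
    using card_UN_Diff_singleton_le[of "{1..t}" S M x] assms(4,5) by (simp add: T_def)
  also have "\<dots> < n"
    using assms(1-3) by (simp add: diff_mult_distrib2 mult.commute)
  finally have card_T: "card T < n" .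
  let ?fail = "{\<omega> \<in> space (triple_space n). fails_both t S x \<omega>}"
  have fail_eq: "?fail = {\<omega> \<in> space (triple_space n). blocked_both T x \<omega>}"
    by (simp add: T_def fails_both_iff_blocked_both)
  have pair: "measure (triple_space n) ?fail \<le> 3 * exp (- 1) - 1"
    unfolding fail_eq using T card_T by (rule measure_blocked_both_le)
  have fail_sets: "?fail \<in> sets (triple_space n)"
    unfolding fail_eq using T(1) by (rule blocked_both_in_sets)
  have repeated: "measure (PiM {..<m} (\<lambda>_. triple_space n))
      {\<omega> \<in> space (PiM {..<m} (\<lambda>_. triple_space n)). \<forall>i<m. fails_both t S x (\<omega> i)}
        \<le> (3 * exp (- 1) - 1) ^ m" for m
    using measure_PiM_all_in[OF prob_space_triple_space _ fail_sets, of "{..<m}"] pair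
    by (simp add: Ball_def power_mono)
  show ?thesis
    unfolding integral_unique[OF has_integral_exp_product]
    using pair repeated order.trans[OF repeated three_div_e_minus_one_pow_13_le] by blast
qed

end
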